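(* Let $N$ be a composite number with $N=\prod_{i=1}^{a}p_i^{2n_i}\prod_{j=1}^{b}q_j^{2m_j+1}$, where $p_1,\ldots,p_a,q_1,\ldots,q_b$ are distinct primes, $n_i\geq 1$ and $m_j\geq 0$ are integers. Then $\omega(\Gamma_E(\mathbb{Z}_N))=\chi(\Gamma_E(\mathbb{Z}_N))=\prod_{i=1}^{a}(n_i+1)\prod_{j=1}^{b}(m_j+1)+b-1.$
   Context: $\mathbb{Z}_N$ is the ring of integers modulo $N$. For a finite commutative ring $R$ with unity, define $x\sim_R y$ iff $Ann(x)=Ann(y)$, with class $C_x$; the compressed zero-divisor graph $\Gamma_E(R)$ has as vertices the classes other than $C_0$ and $C_1$, with distinct $C_x,C_y$ adjacent iff $xy=0$. For $R=\mathbb{Z}_N$ the vertices of $\Gamma_E(\mathbb{Z}_N)$ correspond to the proper divisors $d$ of $N$ ($1<d<N$), two distinct ones $d,d'$ being adjacent iff $N\mid dd'$. $\omega$ is the clique number and $\chi$ the chromatic number. *)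

theory Defs
  imports "HOL-Computational_Algebra.Primes"
begin

text \<open>Compressed zero-divisor graph of Z_N: vertices are the proper divisors d of N
  (1 < d < N); distinct d, d' adjacent iff N divides d * d'.\<close>

definition zvert :: "nat \<Rightarrow> nat set" where
  "zvert N = {d. d dvd N \<and> 1 < d \<and> d < N}"

definition zadj :: "nat \<Rightarrow> nat \<Rightarrow> nat \<Rightarrow> bool" where
  "zadj N d d' \<longleftrightarrow> d \<in> zvert N \<and> d' \<in> zvert N \<and> d \<noteq> d' \<and> N dvd d * d'"

definition is_clique :: "nat \<Rightarrow> nat set \<Rightarrow> bool" where
  "is_clique N K \<longleftrightarrow> K \<subseteq> zvert N \<and> (\<forall>x\<in>K. \<forall>y\<in>K. x \<noteq> y \<longrightarrow> zadj N x y)"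

definition clique_number :: "nat \<Rightarrow> nat" where
  "clique_number N = Max {card K | K. is_clique N K}"

definition is_colouring :: "nat \<Rightarrow> nat \<Rightarrow> (nat \<Rightarrow> nat) \<Rightarrow> bool" where
  "is_colouring N k c \<longleftrightarrow> (\<forall>v\<in>zvert N. c v < k) \<and> (\<forall>u v. zadj N u v \<longrightarrow> c u \<noteq> c v)"

definition chromatic_number :: "nat \<Rightarrow> nat" where
  "chromatic_number N = (LEAST k. \<exists>c. is_colouring N k c)"

end

(* Write a divisor d of N = prod p^(e p) through its exponents a p = multiplicity p d, so that
   N divides d * d' iff a p + a' p >= e p for every p.  The proper divisors with every
   a p >= ceil (e p / 2), together with one divisor for each prime q of odd exponent
   (a q = floor (e q / 2) and a p = e p otherwise; proper because N is not prime), form a clique.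
   The same set serves as a set of colours.  A vertex whose exponents are all at least
   floor (e p / 2) but with some a q < ceil (e q / 2) (hence e q odd) gets the clique divisor of the
   least such q; two such vertices sharing q are not adjacent.  Every other vertex d gets the divisor
   with exponents max (a p) (ceil (e p / 2)): this is d itself if d lies in the clique, and otherwise
   some a p < floor (e p / 2) forces every neighbour of d to have exponent > ceil (e p / 2) at p,
   so its colour differs. *)

theory Submission
  imports Defs "HOL-Library.FuncSet"
begin

lemma clique_card_le_colours:
  assumes "is_colouring N k c" and "is_clique N K"
  shows "card K \<le> k"
proof -
  have "inj_on c K"
    using assms unfolding is_colouring_def is_clique_def inj_on_def by blast
  moreover have "c ` K \<subseteq> {0..<k}"
    using assms unfolding is_colouring_def is_clique_def by auto
  ultimately show ?thesis
    using card_inj_on_le[of c K "{0..<k}"] by simp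
qed

lemma colouring_from_map:
  assumes "finite C" and "\<And>v. v \<in> zvert N \<Longrightarrow> col v \<in> C"
    and "\<And>u v. zadj N u v \<Longrightarrow> col u \<noteq> col v"
  shows "\<exists>c. is_colouring N (card C) c"
proof -
  obtain b where b: "bij_betw b C {0..<card C}"
    using ex_bij_betw_finite_nat[OF assms(1)] by blast
  have "is_colouring N (card C) (b \<circ> col)"
    unfolding is_colouring_def
  proof (intro conjI ballI allI impI)
    fix v assume "v \<in> zvert N"
    then show "(b \<circ> col) v < card C"
      using assms(2) b by (auto simp: bij_betw_def)
  next
    fix u v assume uv: "zadj N u v"
    then have "col u \<in> C" "col v \<in> C"
      using assms(2) unfolding zadj_def by auto
    then show "(b \<circ> col) u \<noteq> (b \<circ> col) v"
      using assms(3)[OF uv] b by (auto simp: bij_betw_def inj_on_def)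
  qed
  then show ?thesis by blast
qed

lemma clique_number_chromatic_number_eqI:
  assumes "finite K" and "is_clique N K" and "\<exists>c. is_colouring N (card K) c"
  shows "clique_number N = card K" and "chromatic_number N = card K"
proof -
  obtain c where c: "is_colouring N (card K) c" using assms(3) by blast
  show "clique_number N = card K"
    unfolding clique_number_def
  proof (rule Max_eqI)
    have "{card K' |K'. is_clique N K'} \<subseteq> {..card K}"
      using clique_card_le_colours[OF c] by auto
    then show "finite {card K' |K'. is_clique N K'}" using finite_subset by blast
  qed (use clique_card_le_colours[OF c] assms(2) in auto)
  show "chromatic_number N = card K"
    unfolding chromatic_number_def
    by (rule Least_equality) (use assms(2,3) clique_card_le_colours in auto)
qed

lemma prod_union_disjoint_if:
  assumes "finite A" and "finite B" and "A \<inter> B = {}"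
  shows "(\<Prod>x\<in>A \<union> B. if x \<in> A then f x else g x) = prod f A * prod g B"
proof -
  have "(\<Prod>x\<in>A \<union> B. if x \<in> A then f x else g x)
      = (\<Prod>x\<in>A. if x \<in> A then f x else g x) * (\<Prod>x\<in>B. if x \<in> A then f x else g x)"
    using assms by (rule prod.union_disjoint)
  also have "\<dots> = prod f A * prod g B"
    using assms(3) by (auto intro!: prod.cong arg_cong2[where f = "(*)"])
  finally show ?thesis .
qed

locale factored_number =
  fixes S :: "nat set" and e :: "nat \<Rightarrow> nat" and N :: nat
  assumes finite_S: "finite S"
    and prime_S: "\<And>p. p \<in> S \<Longrightarrow> prime p"
    and exp_pos: "\<And>p. p \<in> S \<Longrightarrow> 1 \<le> e p"
    and N_eq: "N = (\<Prod>p\<in>S. p ^ e p)"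
begin

definition from_exps :: "(nat \<Rightarrow> nat) \<Rightarrow> nat" where
  "from_exps f = (\<Prod>p\<in>S. p ^ f p)"

lemma from_exps_pos: "0 < from_exps f"
  unfolding from_exps_def using finite_S prime_S by (simp add: prime_gt_0_nat prod_pos)

lemma multiplicity_from_exps:
  "prime p \<Longrightarrow> multiplicity p (from_exps f) = (if p \<in> S then f p else 0)"
  unfolding from_exps_def by (rule multiplicity_prod_prime_powers[OF finite_S prime_S])

lemma multiplicity_N: "prime p \<Longrightarrow> multiplicity p N = (if p \<in> S then e p else 0)"
  using multiplicity_from_exps[of p e] by (simp add: N_eq from_exps_def)

lemma N_pos: "0 < N"
  using from_exps_pos by (simp add: N_eq from_exps_def)

lemma from_exps_dvd_N: "(\<And>p. p \<in> S \<Longrightarrow> f p \<le> e p) \<Longrightarrow> from_exps f dvd N"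
  by (rule multiplicity_le_imp_dvd) (use from_exps_pos in \<open>auto simp: multiplicity_from_exps multiplicity_N\<close>)

lemma multiplicity_le_if_dvd_N:
  assumes "d dvd N" and "prime p"
  shows "multiplicity p d \<le> (if p \<in> S then e p else 0)"
  using dvd_imp_multiplicity_le[OF assms(1), of p] N_pos multiplicity_N[OF assms(2)] by simp

lemma multiplicity_le_exp: "d dvd N \<Longrightarrow> p \<in> S \<Longrightarrow> multiplicity p d \<le> e p"
  using multiplicity_le_if_dvd_N[of d p] prime_S by simp

lemma divisor_eqI:
  assumes "d dvd N" and "d' dvd N" and "\<And>p. p \<in> S \<Longrightarrow> multiplicity p d = multiplicity p d'"
  shows "d = d'"
proof -
  have "normalize d = normalize d'"
  proof (rule multiplicity_eq_imp_eq)
    show "d \<noteq> 0" "d' \<noteq> 0" using assms(1,2) N_pos by auto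
    fix p :: nat assume "prime p"
    then show "multiplicity p d = multiplicity p d'"
      using assms multiplicity_le_if_dvd_N[of d p] multiplicity_le_if_dvd_N[of d' p]
      by (cases "p \<in> S") auto
  qed
  then show ?thesis by simp
qed

lemma N_dvd_mult_iff:
  assumes "0 < d" and "0 < d'"
  shows "N dvd d * d' \<longleftrightarrow> (\<forall>p\<in>S. e p \<le> multiplicity p d + multiplicity p d')"
proof
  assume dvd: "N dvd d * d'"
  show "\<forall>p\<in>S. e p \<le> multiplicity p d + multiplicity p d'"
  proof
    fix p assume "p \<in> S"
    then show "e p \<le> multiplicity p d + multiplicity p d'"
      using assms dvd_imp_multiplicity_le[OF dvd, of p] prime_S multiplicity_N
      by (simp add: prime_elem_multiplicity_mult_distrib)
  qed
next
  assume "\<forall>p\<in>S. e p \<le> multiplicity p d + multiplicity p d'"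
  then show "N dvd d * d'"
    using assms N_pos
    by (intro multiplicity_le_imp_dvd) (auto simp: multiplicity_N prime_elem_multiplicity_mult_distrib)
qed

lemma divisor_in_zvert: "d dvd N \<Longrightarrow> d \<noteq> 1 \<Longrightarrow> d \<noteq> N \<Longrightarrow> d \<in> zvert N"
  using N_pos by (auto simp: zvert_def dvd_imp_le le_neq_implies_less intro: Nat.gr0I)

lemma zadj_multiplicity: "zadj N u v \<Longrightarrow> p \<in> S \<Longrightarrow> e p \<le> multiplicity p u + multiplicity p v"
  unfolding zadj_def zvert_def using N_dvd_mult_iff by auto

definition upper_half :: "nat \<Rightarrow> nat" where
  "upper_half p = (e p + 1) div 2"

lemma upper_half_le_exp: "upper_half p \<le> e p"
  unfolding upper_half_def by presburger

definition upper_divisors :: "nat set" where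
  "upper_divisors = {d. d dvd N \<and> (\<forall>p\<in>S. upper_half p \<le> multiplicity p d)}"

lemma bij_betw_upper_divisors:
  "bij_betw from_exps (PiE S (\<lambda>p. {upper_half p..e p})) upper_divisors"
proof (rule bij_betw_imageI)
  show "inj_on from_exps (PiE S (\<lambda>p. {upper_half p..e p}))"
  proof (rule inj_onI)
    fix f g assume f: "f \<in> PiE S (\<lambda>p. {upper_half p..e p})"
      and g: "g \<in> PiE S (\<lambda>p. {upper_half p..e p})" and eq: "from_exps f = from_exps g"
    show "f = g"
    proof (rule PiE_ext[OF f g])
      fix p assume "p \<in> S"
      then show "f p = g p"
        using multiplicity_from_exps[of p f] multiplicity_from_exps[of p g] eq prime_S by simp
    qed
  qed
  show "from_exps ` PiE S (\<lambda>p. {upper_half p..e p}) = upper_divisors"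
  proof (intro equalityI subsetI)
    fix d assume "d \<in> from_exps ` PiE S (\<lambda>p. {upper_half p..e p})"
    then obtain f where f: "f \<in> PiE S (\<lambda>p. {upper_half p..e p})" and d: "d = from_exps f"
      by blast
    have "d dvd N"
      using f unfolding d by (intro from_exps_dvd_N) auto
    moreover have "\<forall>p\<in>S. upper_half p \<le> multiplicity p d"
      using f by (auto simp: d multiplicity_from_exps prime_S)
    ultimately show "d \<in> upper_divisors"
      by (simp add: upper_divisors_def)
  next
    fix d assume d: "d \<in> upper_divisors"
    then have "d dvd N" by (simp add: upper_divisors_def)
    define f where "f = restrict (\<lambda>p. multiplicity p d) S"
    have "f \<in> PiE S (\<lambda>p. {upper_half p..e p})"
      using d multiplicity_le_exp[OF \<open>d dvd N\<close>] by (auto simp: f_def upper_divisors_def)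
    moreover have "d = from_exps f"
    proof (rule divisor_eqI[OF \<open>d dvd N\<close>])
      show "from_exps f dvd N"
        using multiplicity_le_exp[OF \<open>d dvd N\<close>] by (intro from_exps_dvd_N) (simp add: f_def)
    qed (simp add: f_def multiplicity_from_exps prime_S)
    ultimately show "d \<in> from_exps ` PiE S (\<lambda>p. {upper_half p..e p})" by blast
  qed
qed

lemma card_upper_divisors: "card upper_divisors = (\<Prod>p\<in>S. e p div 2 + 1)"
proof -
  have "card upper_divisors = card (PiE S (\<lambda>p. {upper_half p..e p}))"
    using bij_betw_same_card[OF bij_betw_upper_divisors] by simp
  also have "\<dots> = (\<Prod>p\<in>S. card {upper_half p..e p})"
    by (rule card_PiE[OF finite_S])
  also have "\<dots> = (\<Prod>p\<in>S. e p div 2 + 1)"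
    by (rule prod.cong) (auto simp: upper_half_def)
  finally show ?thesis .
qed

lemma finite_upper_divisors: "finite upper_divisors"
proof (rule card_ge_0_finite)
  show "0 < card upper_divisors"
    unfolding card_upper_divisors by (rule prod_pos) simp
qed

lemma N_in_upper_divisors: "N \<in> upper_divisors"
  unfolding upper_divisors_def using multiplicity_N prime_S upper_half_le_exp by simp

lemma upper_divisors_minus_N_subset_zvert: "upper_divisors - {N} \<subseteq> zvert N"
proof
  fix d assume d: "d \<in> upper_divisors - {N}"
  then have "d dvd N" and "d \<noteq> N" by (simp_all add: upper_divisors_def)
  have "d \<noteq> 1"
  proof
    assume "d = 1"
    have "S = {}"
    proof (rule ccontr)
      assume "S \<noteq> {}"
      then obtain p where "p \<in> S" by blast
      then have "1 \<le> upper_half p" using exp_pos[of p] unfolding upper_half_def by presburger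
      with \<open>p \<in> S\<close> d \<open>d = 1\<close> show False by (auto simp: upper_divisors_def)
    qed
    then show False using \<open>d = 1\<close> \<open>d \<noteq> N\<close> by (simp add: N_eq)
  qed
  with \<open>d dvd N\<close> \<open>d \<noteq> N\<close> show "d \<in> zvert N"
    by (simp add: divisor_in_zvert)
qed

definition raise :: "nat \<Rightarrow> nat" where
  "raise d = from_exps (\<lambda>p. max (multiplicity p d) (upper_half p))"

lemma multiplicity_raise:
  "p \<in> S \<Longrightarrow> multiplicity p (raise d) = max (multiplicity p d) (upper_half p)"
  unfolding raise_def using multiplicity_from_exps prime_S by simp

lemma raise_in_upper_divisors: "d dvd N \<Longrightarrow> raise d \<in> upper_divisors"
proof -
  assume "d dvd N"
  then have "raise d dvd N"
    using multiplicity_le_exp upper_half_le_exp unfolding raise_def by (intro from_exps_dvd_N) simp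
  then show ?thesis by (simp add: upper_divisors_def multiplicity_raise)
qed

lemma raise_eq_self: "d \<in> upper_divisors \<Longrightarrow> raise d = d"
proof -
  assume d: "d \<in> upper_divisors"
  then have "d dvd N" by (simp add: upper_divisors_def)
  show "raise d = d"
  proof (rule divisor_eqI)
    show "raise d dvd N"
      using raise_in_upper_divisors[OF \<open>d dvd N\<close>] by (simp add: upper_divisors_def)
    fix p assume "p \<in> S"
    then show "multiplicity p (raise d) = multiplicity p d"
      using d by (auto simp: multiplicity_raise upper_divisors_def)
  qed fact
qed

lemma raise_ne_N:
  assumes "p \<in> S" and "multiplicity p d < e p div 2"
  shows "raise d \<noteq> N"
proof -
  have "multiplicity p (raise d) = upper_half p"
    using assms by (simp add: multiplicity_raise upper_half_def)
  moreover have "upper_half p < e p"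
    using assms(2) by (simp add: upper_half_def)
  ultimately show ?thesis
    using multiplicity_N[of p] prime_S assms(1) by auto
qed

lemma raise_ne_if_zadj:
  assumes "zadj N u v" and "p \<in> S" and "multiplicity p u < e p div 2"
  shows "raise u \<noteq> raise v"
proof -
  have "multiplicity p (raise u) = upper_half p"
    using assms(2,3) by (simp add: multiplicity_raise upper_half_def)
  moreover have "upper_half p < multiplicity p v"
    using zadj_multiplicity[OF assms(1,2)] assms(3) by (simp add: upper_half_def)
  ultimately show ?thesis
    using multiplicity_raise[OF assms(2), of v] by auto
qed

definition half_cut :: "nat \<Rightarrow> nat" where
  "half_cut q = from_exps (e(q := e q div 2))"

definition odd_exp_primes :: "nat set" where
  "odd_exp_primes = {q\<in>S. odd (e q)}"

lemma multiplicity_half_cut: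
  "p \<in> S \<Longrightarrow> multiplicity p (half_cut q) = (if p = q then e q div 2 else e p)"
  unfolding half_cut_def using multiplicity_from_exps prime_S by simp

lemma half_cut_dvd_N: "half_cut q dvd N"
  unfolding half_cut_def by (rule from_exps_dvd_N) simp

lemma inj_on_half_cut: "inj_on half_cut S"
proof (rule inj_onI)
  fix q q' assume "q \<in> S" "q' \<in> S" "half_cut q = half_cut q'"
  then have "multiplicity q (half_cut q) = multiplicity q (half_cut q')" by simp
  then show "q = q'"
    using exp_pos[OF \<open>q \<in> S\<close>] multiplicity_half_cut[OF \<open>q \<in> S\<close>] by (auto split: if_splits)
qed

lemma half_cut_notin_upper_divisors: "q \<in> odd_exp_primes \<Longrightarrow> half_cut q \<notin> upper_divisors"
  by (auto simp: odd_exp_primes_def upper_divisors_def multiplicity_half_cut upper_half_def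
      elim!: oddE)

lemma half_cut_in_zvert:
  assumes "\<not> prime N" and "q \<in> odd_exp_primes"
  shows "half_cut q \<in> zvert N"
proof -
  have q: "q \<in> S" "odd (e q)" using assms(2) by (simp_all add: odd_exp_primes_def)
  have "half_cut q \<noteq> N"
    using half_cut_notin_upper_divisors[OF assms(2)] N_in_upper_divisors by auto
  moreover have "half_cut q \<noteq> 1"
  proof
    assume cut_1: "half_cut q = 1"
    have "S = {q}"
    proof (rule ccontr)
      assume "S \<noteq> {q}"
      then obtain p where "p \<in> S" "p \<noteq> q" using q(1) by blast
      then show False
        using cut_1 multiplicity_half_cut[of p q] exp_pos[of p] by simp
    qed
    moreover have "e q = 1"
      using cut_1 multiplicity_half_cut[OF q(1), of q] q(2) by (auto elim!: oddE)
    ultimately show False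
      using assms(1) prime_S[OF q(1)] by (simp add: N_eq)
  qed
  ultimately show ?thesis
    using half_cut_dvd_N by (simp add: divisor_in_zvert)
qed

definition max_clique :: "nat set" where
  "max_clique = (upper_divisors - {N}) \<union> half_cut ` odd_exp_primes"

lemma upper_half_le_multiplicity_max_clique:
  assumes "x \<in> max_clique" and "p \<in> S" and "x \<noteq> half_cut p"
  shows "upper_half p \<le> multiplicity p x"
  using assms upper_half_le_exp
  by (auto simp: max_clique_def upper_divisors_def odd_exp_primes_def multiplicity_half_cut)

lemma is_clique_max_clique:
  assumes "\<not> prime N"
  shows "is_clique N max_clique"
  unfolding is_clique_def
proof (intro conjI ballI impI)
  show sub: "max_clique \<subseteq> zvert N"
    using upper_divisors_minus_N_subset_zvert half_cut_in_zvert[OF assms]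
    by (auto simp: max_clique_def)
  fix x y assume x: "x \<in> max_clique" and y: "y \<in> max_clique" and "x \<noteq> y"
  have "e p \<le> multiplicity p x + multiplicity p y" if "p \<in> S" for p
  proof -
    have halves: "e p \<le> upper_half p + upper_half p" "e p = e p div 2 + upper_half p"
      unfolding upper_half_def by presburger+
    consider "x = half_cut p" | "y = half_cut p" | "x \<noteq> half_cut p" "y \<noteq> half_cut p"
      by blast
    then show ?thesis
      using upper_half_le_multiplicity_max_clique[OF x that] upper_half_le_multiplicity_max_clique[OF y that]
        multiplicity_half_cut[OF that, of p] \<open>x \<noteq> y\<close> halves
      by cases auto
  qed
  moreover have "x \<in> zvert N" "y \<in> zvert N"
    using x y sub by auto
  ultimately show "zadj N x y"
    using \<open>x \<noteq> y\<close> N_dvd_mult_iff by (simp add: zadj_def zvert_def)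
qed

lemma finite_max_clique: "finite max_clique"
  using finite_upper_divisors finite_S by (simp add: max_clique_def odd_exp_primes_def)

lemma card_max_clique: "card max_clique + 1 = (\<Prod>p\<in>S. e p div 2 + 1) + card odd_exp_primes"
proof -
  have "card max_clique = card (upper_divisors - {N}) + card (half_cut ` odd_exp_primes)"
    unfolding max_clique_def using finite_upper_divisors finite_S half_cut_notin_upper_divisors
    by (intro card_Un_disjoint) (auto simp: odd_exp_primes_def)
  moreover have "card (half_cut ` odd_exp_primes) = card odd_exp_primes"
    by (rule card_image, rule inj_on_subset[OF inj_on_half_cut]) (auto simp: odd_exp_primes_def)
  moreover have "card (upper_divisors - {N}) + 1 = card upper_divisors"
    using card_Suc_Diff1[OF finite_upper_divisors N_in_upper_divisors] by simp
  ultimately show ?thesis by (simp add: card_upper_divisors)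
qed

definition nearly_upper :: "nat \<Rightarrow> bool" where
  "nearly_upper d \<longleftrightarrow>
     (\<forall>p\<in>S. e p div 2 \<le> multiplicity p d) \<and> (\<exists>p\<in>S. multiplicity p d < upper_half p)"

definition colour :: "nat \<Rightarrow> nat" where
  "colour d = (if nearly_upper d
     then half_cut (LEAST q. q \<in> S \<and> multiplicity q d < upper_half q) else raise d)"

lemma colour_nearly_upper:
  assumes "nearly_upper d"
  obtains q where "q \<in> odd_exp_primes" and "multiplicity q d = e q div 2" and "colour d = half_cut q"
proof
  define q where "q = (LEAST q. q \<in> S \<and> multiplicity q d < upper_half q)"
  have "q \<in> S \<and> multiplicity q d < upper_half q"
    unfolding q_def by (rule LeastI_ex) (use assms in \<open>auto simp: nearly_upper_def\<close>)
  moreover have "e q div 2 \<le> multiplicity q d"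
    using assms calculation by (simp add: nearly_upper_def)
  ultimately show "q \<in> odd_exp_primes" "multiplicity q d = e q div 2"
    unfolding odd_exp_primes_def upper_half_def by auto
  show "colour d = half_cut q"
    using assms by (simp add: colour_def q_def)
qed

lemma not_nearly_upperE:
  assumes "d dvd N" and "\<not> nearly_upper d"
  obtains "d \<in> upper_divisors" | p where "p \<in> S" and "multiplicity p d < e p div 2"
  using assms unfolding nearly_upper_def upper_divisors_def by (auto simp: not_le not_less)

lemma colour_not_nearly_upper:
  assumes "d \<in> zvert N" and "\<not> nearly_upper d"
  shows "colour d = raise d" and "raise d \<in> upper_divisors - {N}"
proof -
  show "colour d = raise d" using assms(2) by (simp add: colour_def)
  have "d dvd N" using assms(1) by (simp add: zvert_def)
  then show "raise d \<in> upper_divisors - {N}"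
  proof (rule not_nearly_upperE[OF _ assms(2)])
    assume "d \<in> upper_divisors"
    then show ?thesis using assms(1) by (simp add: raise_eq_self zvert_def)
  next
    fix p assume "p \<in> S" and "multiplicity p d < e p div 2"
    then show ?thesis using raise_ne_N raise_in_upper_divisors[OF \<open>d dvd N\<close>] by blast
  qed
qed

lemma colour_in_max_clique:
  assumes "d \<in> zvert N"
  shows "colour d \<in> max_clique"
proof (cases "nearly_upper d")
  case True
  then show ?thesis
    by (rule colour_nearly_upper) (simp add: max_clique_def)
next
  case False
  then show ?thesis
    using colour_not_nearly_upper[OF assms] by (simp add: max_clique_def)
qed

lemma colour_in_upper_divisors_iff:
  assumes "d \<in> zvert N"
  shows "colour d \<in> upper_divisors \<longleftrightarrow> \<not> nearly_upper d"
proof (cases "nearly_upper d")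
  case True
  then show ?thesis
    by (rule colour_nearly_upper) (simp add: half_cut_notin_upper_divisors True)
next
  case False
  then show ?thesis
    using colour_not_nearly_upper[OF assms] by simp
qed

lemma colour_proper:
  assumes "zadj N u v"
  shows "colour u \<noteq> colour v"
proof
  assume same: "colour u = colour v"
  have u: "u \<in> zvert N" and v: "v \<in> zvert N" using assms by (simp_all add: zadj_def)
  have "nearly_upper u \<longleftrightarrow> nearly_upper v"
    using colour_in_upper_divisors_iff[OF u] colour_in_upper_divisors_iff[OF v] same by simp
  show False
  proof (cases "nearly_upper u")
    case True
    obtain q where q: "q \<in> odd_exp_primes" "multiplicity q u = e q div 2" "colour u = half_cut q"
      using colour_nearly_upper[OF True] by blast
    obtain q' where q': "q' \<in> odd_exp_primes" "multiplicity q' v = e q' div 2" "colour v = half_cut q'"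
      using colour_nearly_upper \<open>nearly_upper u \<longleftrightarrow> nearly_upper v\<close> True by blast
    have "q = q'"
      using same q q' inj_on_half_cut by (auto simp: odd_exp_primes_def dest: inj_onD)
    then have "e q \<le> e q div 2 + e q div 2"
      using zadj_multiplicity[OF assms, of q] q q' by (simp add: odd_exp_primes_def)
    then show False using q(1) by (auto simp: odd_exp_primes_def elim!: oddE)
  next
    case False
    then have raise_eq: "raise u = raise v"
      using same colour_not_nearly_upper(1) u v \<open>nearly_upper u \<longleftrightarrow> nearly_upper v\<close> by simp
    have "zadj N v u"
      using assms by (auto simp: zadj_def mult.commute)
    have "u \<in> upper_divisors"
      using u False raise_ne_if_zadj[OF assms] raise_eq
      by (auto simp: zvert_def elim: not_nearly_upperE)
    moreover have "v \<in> upper_divisors"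
      using v False raise_ne_if_zadj[OF \<open>zadj N v u\<close>] raise_eq \<open>nearly_upper u \<longleftrightarrow> nearly_upper v\<close>
      by (auto simp: zvert_def elim: not_nearly_upperE)
    ultimately show False
      using raise_eq raise_eq_self assms by (simp add: zadj_def)
  qed
qed

theorem clique_number_chromatic_number:
  assumes "\<not> prime N"
  shows "clique_number N + 1 = (\<Prod>p\<in>S. e p div 2 + 1) + card odd_exp_primes"
    and "chromatic_number N = clique_number N"
proof -
  have "\<exists>c. is_colouring N (card max_clique) c"
    using finite_max_clique colour_in_max_clique colour_proper by (rule colouring_from_map)
  then have "clique_number N = card max_clique" "chromatic_number N = card max_clique"
    using clique_number_chromatic_number_eqI finite_max_clique is_clique_max_clique[OF assms] by blast+
  then show "clique_number N + 1 = (\<Prod>p\<in>S. e p div 2 + 1) + card odd_exp_primes"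
    and "chromatic_number N = clique_number N"
    using card_max_clique by simp_all
qed

end

theorem lemma5p1:
  fixes N :: nat and P Q :: "nat set" and n m :: "nat \<Rightarrow> nat"
  assumes "finite P" and "finite Q" and "P \<inter> Q = {}"
    and "\<forall>p\<in>P. prime p" and "\<forall>q\<in>Q. prime q"
    and "\<forall>p\<in>P. n p \<ge> 1"
    and "N = (\<Prod>p\<in>P. p ^ (2 * n p)) * (\<Prod>q\<in>Q. q ^ (2 * m q + 1))"
    and "N > 1" and "\<not> prime N"
  shows "int (clique_number N) = (\<Prod>p\<in>P. int (n p + 1)) * (\<Prod>q\<in>Q. int (m q + 1)) + int (card Q) - 1
         \<and> chromatic_number N = clique_number N"
proof -
  define e where "e p = (if p \<in> P then 2 * n p else 2 * m p + 1)" for p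
  interpret factored_number "P \<union> Q" e N
  proof
    show "N = (\<Prod>p\<in>P \<union> Q. p ^ e p)"
      using prod_union_disjoint_if[OF assms(1-3), of "\<lambda>p. p ^ (2 * n p)" "\<lambda>q. q ^ (2 * m q + 1)"]
      by (simp add: assms(7) e_def if_distrib)
  qed (use assms(1,2,4-6) in \<open>auto simp: e_def\<close>)
  have "odd_exp_primes = Q"
    using assms(3) by (auto simp: odd_exp_primes_def e_def)
  then have "clique_number N + 1 = (\<Prod>p\<in>P \<union> Q. e p div 2 + 1) + card Q"
    using clique_number_chromatic_number(1)[OF assms(9)] by simp
  also have "(\<Prod>p\<in>P \<union> Q. e p div 2 + 1) = (\<Prod>p\<in>P \<union> Q. if p \<in> P then n p + 1 else m p + 1)"
    by (rule prod.cong) (simp_all add: e_def)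
  also have "\<dots> = (\<Prod>p\<in>P. n p + 1) * (\<Prod>q\<in>Q. m q + 1)"
    by (rule prod_union_disjoint_if[OF assms(1-3)])
  finally have "int (clique_number N + 1) = int ((\<Prod>p\<in>P. n p + 1) * (\<Prod>q\<in>Q. m q + 1) + card Q)"
    by (rule arg_cong)
  then have "int (clique_number N) + 1 = (\<Prod>p\<in>P. int (n p + 1)) * (\<Prod>q\<in>Q. int (m q + 1)) + int (card Q)"
    by (simp only: of_nat_1 of_nat_add of_nat_mult of_nat_prod)
  then show ?thesis
    using clique_number_chromatic_number(2)[OF assms(9)] by linarith
qed

end
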